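(* Let $\phi:\mathbb{N}_0\to\mathbb{N}_0$ satisfy $\phi(0)=0$ and $\phi(x)\neq x$ for all $x\in\mathbb{N}$, let $k,n\ge1$, and assume the local function $\phi_n$ has no cycle. Let $p_\nu=|\{x\in D_n:h(x)=\nu\}|$ for $1\le\nu\le n$, $m=\max\{\nu\in\{1,\dots,n\}:p_\nu\ge1\}$ and $\pi=(p_1,\dots,p_m)$. Then $\pi$ is an ordered partition (composition) of $n$ of length $m$ with $1\le m\le n$ and $p_1,\dots,p_m\ge1$. Moreover, with $J_{n,k}(\phi)=\{x\in D_n:\phi_n^k(x)\in D_n\}$, \[ |J_{n,k}(\phi)|=n-\sum_{\nu=1}^k p_\nu\quad(1\le k\le m), \] and $|J_{n,k}(\phi)|=0$ for $k\ge m$.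
   Context: $\mathbb{N}=\{1,2,\dots\}$, $\mathbb{N}_0=\mathbb{N}\cup\{0\}$, $D_n=\{1,\dots,n\}$, $D_{n,0}=D_n\cup\{0\}$. The local function $\phi_n:D_{n,0}\to D_{n,0}$ is $\phi_n(x)=\phi(x)$ if $x\in D_n$ and $\phi(x)\in D_n$, and $\phi_n(x)=0$ otherwise. "$\phi_n$ has no cycle" means there are no $m\ge2$ and $x\in D_n$ with $\phi_n^m(x)=x$. The height of $x\in D_n$ is $h(x)=\min\{k\in\mathbb{N}:\phi_n^k(x)=0\}$. *)

theory Defs
  imports Main
begin

definition loc :: "(nat \<Rightarrow> nat) \<Rightarrow> nat \<Rightarrow> nat \<Rightarrow> nat" where
  "loc \<phi> n x = (if x \<in> {1..n} \<and> \<phi> x \<in> {1..n} then \<phi> x else 0)"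

definition no_cycle :: "(nat \<Rightarrow> nat) \<Rightarrow> nat \<Rightarrow> bool" where
  "no_cycle \<phi> n \<longleftrightarrow> \<not> (\<exists>m\<ge>2. \<exists>x\<in>{1..n}. (loc \<phi> n ^^ m) x = x)"

definition height :: "(nat \<Rightarrow> nat) \<Rightarrow> nat \<Rightarrow> nat \<Rightarrow> nat" where
  "height \<phi> n x = (LEAST k. k \<ge> 1 \<and> (loc \<phi> n ^^ k) x = 0)"

definition J :: "(nat \<Rightarrow> nat) \<Rightarrow> nat \<Rightarrow> nat \<Rightarrow> nat set" where
  "J \<phi> n k = {x \<in> {1..n}. (loc \<phi> n ^^ k) x \<in> {1..n}}"

definition is_composition :: "nat \<Rightarrow> nat list \<Rightarrow> bool" where
  "is_composition n ps \<longleftrightarrow> (\<forall>p\<in>set ps. p \<ge> 1) \<and> sum_list ps = n"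

end

theory Submission
  imports Defs
begin

text \<open>Without cycles the orbit of x \<in> D_n under phi_n must leave D_n within n steps
(pigeonhole), and along the orbit the height drops by exactly one per step. Hence the heights
occurring in D_n form an initial segment {1..m}: every p_nu with nu \<le> m is positive and they
sum to n. Moreover phi_n^k x stays in D_n exactly when h(x) > k, so J_{n,k} is the complement
of the points of height at most k.\<close>

lemma is_composition_map_upt:
  assumes "\<forall>\<nu>\<in>{1..m}. f \<nu> \<ge> 1" and "(\<Sum>\<nu>=1..m. f \<nu>) = n"
  shows "is_composition n (map f [1..<m+1])"
proof -
  have "sum_list (map f [1..<m+1]) = (\<Sum>\<nu>=1..m. f \<nu>)"
    by (metis Suc_eq_plus1 atLeastLessThanSuc_atLeastAtMost set_upt sum_set_upt_conv_sum_list_nat)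
  then show ?thesis
    using assms unfolding is_composition_def by (auto simp del: upt_Suc)
qed

lemma loc_le: "loc \<phi> n x \<le> n"
  by (simp add: loc_def)

lemma funpow_loc_0: "(loc \<phi> n ^^ k) 0 = 0"
  by (induction k) (simp_all add: loc_def)

lemma funpow_loc_in_D_iff:
  assumes "k \<ge> 1"
  shows "(loc \<phi> n ^^ k) x \<in> {1..n} \<longleftrightarrow> (loc \<phi> n ^^ k) x \<noteq> 0"
  using assms by (cases k) (auto simp: loc_le)

lemma funpow_loc_shift:
  assumes "i \<le> j"
  shows "(loc \<phi> n ^^ (j - i)) ((loc \<phi> n ^^ i) x) = (loc \<phi> n ^^ j) x"
  using assms by (metis funpow_add comp_apply le_add_diff_inverse2)

locale acyclic_local_function =
  fixes \<phi> :: "nat \<Rightarrow> nat" and n :: nat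
  assumes no_fixpoint: "\<forall>x\<ge>1. \<phi> x \<noteq> x"
    and acyclic: "no_cycle \<phi> n"
begin

lemma funpow_loc_neq_self:
  assumes "x \<in> {1..n}" and "j \<ge> 1"
  shows "(loc \<phi> n ^^ j) x \<noteq> x"
proof (cases "j = 1")
  case True
  then show ?thesis using no_fixpoint assms(1) by (auto simp: loc_def)
next
  case False
  then show ?thesis using acyclic assms unfolding no_cycle_def by auto
qed

lemma reaches_0:
  assumes x: "x \<in> {1..n}"
  shows "\<exists>k\<in>{1..n}. (loc \<phi> n ^^ k) x = 0"
proof (rule ccontr)
  assume never_0: "\<not> ?thesis"
  let ?orbit = "\<lambda>i. (loc \<phi> n ^^ i) x"
  have orbit_in_D: "?orbit i \<in> {1..n}" if "i \<le> n" for i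
  proof (cases "i = 0")
    case True
    then show ?thesis using x by simp
  next
    case False
    then show ?thesis using never_0 that funpow_loc_in_D_iff[of i \<phi> n x] by auto
  qed
  then have "card (?orbit ` {0..n}) \<le> card {1..n}"
    by (intro card_mono image_subsetI) simp_all
  then have "\<not> inj_on ?orbit {0..n}"
    by (intro pigeonhole) simp
  then obtain i j where ij: "i < j" "j \<le> n" "?orbit i = ?orbit j"
    unfolding inj_on_def by (metis atLeastAtMost_iff linorder_neqE_nat)
  have "?orbit i \<in> {1..n}"
    using orbit_in_D ij by simp
  moreover have "(loc \<phi> n ^^ (j - i)) (?orbit i) = ?orbit i"
    using funpow_loc_shift[of i j \<phi> n x] ij by (metis less_imp_le)
  ultimately show False
    using funpow_loc_neq_self \<open>i < j\<close> by simp
qed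

lemma funpow_loc_eq_0_iff:
  assumes x: "x \<in> {1..n}"
  shows "(loc \<phi> n ^^ k) x = 0 \<longleftrightarrow> height \<phi> n x \<le> k"
proof -
  obtain k0 where "k0 \<ge> 1" "(loc \<phi> n ^^ k0) x = 0"
    using reaches_0[OF x] by auto
  then have height: "height \<phi> n x \<ge> 1" "(loc \<phi> n ^^ height \<phi> n x) x = 0"
    unfolding height_def by (metis (mono_tags, lifting) LeastI)+
  show ?thesis
  proof
    assume "(loc \<phi> n ^^ k) x = 0"
    moreover have "k \<noteq> 0"
      using x calculation by (cases k) auto
    ultimately show "height \<phi> n x \<le> k"
      unfolding height_def by (simp add: Least_le)
  next
    assume "height \<phi> n x \<le> k"
    then show "(loc \<phi> n ^^ k) x = 0"
      using height funpow_loc_shift[of "height \<phi> n x" k] by (metis funpow_loc_0)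
  qed
qed

lemma height_ge_1: "x \<in> {1..n} \<Longrightarrow> height \<phi> n x \<ge> 1"
  using funpow_loc_eq_0_iff[of x 0] by auto

lemma height_le_n: "x \<in> {1..n} \<Longrightarrow> height \<phi> n x \<le> n"
  using reaches_0 funpow_loc_eq_0_iff by fastforce

lemma height_funpow:
  assumes x: "x \<in> {1..n}" and j: "j < height \<phi> n x"
  shows "(loc \<phi> n ^^ j) x \<in> {1..n}" "height \<phi> n ((loc \<phi> n ^^ j) x) = height \<phi> n x - j"
proof -
  let ?y = "(loc \<phi> n ^^ j) x"
  show y: "?y \<in> {1..n}"
    using x j funpow_loc_eq_0_iff[OF x, of j] funpow_loc_in_D_iff[of j \<phi> n x]
    by (cases "j = 0") auto
  have "(loc \<phi> n ^^ k) ?y = 0 \<longleftrightarrow> height \<phi> n x - j \<le> k" for k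
    using funpow_loc_eq_0_iff[OF x, of "k + j"] j by (simp add: funpow_add) linarith
  then show "height \<phi> n ?y = height \<phi> n x - j"
    using funpow_loc_eq_0_iff[OF y] by (metis le_antisym order_refl)
qed

lemma J_eq_height_gt:
  assumes "k \<ge> 1"
  shows "J \<phi> n k = {x \<in> {1..n}. k < height \<phi> n x}"
proof -
  have "(loc \<phi> n ^^ k) x \<in> {1..n} \<longleftrightarrow> k < height \<phi> n x" if "x \<in> {1..n}" for x
    using funpow_loc_in_D_iff[OF assms] funpow_loc_eq_0_iff[OF that, of k] by auto
  then show ?thesis
    unfolding J_def by blast
qed

lemma sum_card_height_eq:
  "(\<Sum>\<nu>=1..k. card {x \<in> {1..n}. height \<phi> n x = \<nu>}) = card {x \<in> {1..n}. height \<phi> n x \<le> k}"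
proof -
  have "(\<Sum>\<nu>=1..k. card {x \<in> {1..n}. height \<phi> n x = \<nu>})
      = card (\<Union>\<nu>\<in>{1..k}. {x \<in> {1..n}. height \<phi> n x = \<nu>})"
    by (rule card_UN_disjoint[symmetric]) auto
  also have "(\<Union>\<nu>\<in>{1..k}. {x \<in> {1..n}. height \<phi> n x = \<nu>}) = {x \<in> {1..n}. height \<phi> n x \<le> k}"
    using height_ge_1 by auto
  finally show ?thesis .
qed

lemma card_J:
  assumes "k \<ge> 1"
  shows "card (J \<phi> n k) = n - (\<Sum>\<nu>=1..k. card {x \<in> {1..n}. height \<phi> n x = \<nu>})"
proof -
  have J_diff: "J \<phi> n k = {1..n} - {x \<in> {1..n}. height \<phi> n x \<le> k}"
    unfolding J_eq_height_gt[OF assms] by auto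
  have "card ({1..n} - {x \<in> {1..n}. height \<phi> n x \<le> k}) = n - card {x \<in> {1..n}. height \<phi> n x \<le> k}"
    by (subst card_Diff_subset) auto
  then show ?thesis
    unfolding J_diff sum_card_height_eq .
qed

lemma max_height_mem:
  assumes "n \<ge> 1"
  shows "Max (height \<phi> n ` {1..n}) \<in> height \<phi> n ` {1..n}"
  using assms by (intro Max_in) auto

lemma max_height_bounds:
  assumes "n \<ge> 1"
  shows "1 \<le> Max (height \<phi> n ` {1..n})" "Max (height \<phi> n ` {1..n}) \<le> n"
  using max_height_mem[OF assms] height_ge_1 height_le_n by auto

lemma heights_initial_segment:
  assumes "n \<ge> 1"
  shows "height \<phi> n ` {1..n} = {1..Max (height \<phi> n ` {1..n})}"
proof
  show "height \<phi> n ` {1..n} \<subseteq> {1..Max (height \<phi> n ` {1..n})}"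
    using height_ge_1 by auto
next
  obtain x where x: "x \<in> {1..n}" and max: "height \<phi> n x = Max (height \<phi> n ` {1..n})"
    using max_height_mem[OF assms] by auto
  show "{1..Max (height \<phi> n ` {1..n})} \<subseteq> height \<phi> n ` {1..n}"
  proof
    fix \<nu> assume "\<nu> \<in> {1..Max (height \<phi> n ` {1..n})}"
    then have "height \<phi> n x - \<nu> < height \<phi> n x" "height \<phi> n x - (height \<phi> n x - \<nu>) = \<nu>"
      using max by auto
    then show "\<nu> \<in> height \<phi> n ` {1..n}"
      using height_funpow[OF x] by (metis image_eqI)
  qed
qed

lemma sum_card_height_eq_n:
  assumes "Max (height \<phi> n ` {1..n}) \<le> k"
  shows "(\<Sum>\<nu>=1..k. card {x \<in> {1..n}. height \<phi> n x = \<nu>}) = n"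
proof -
  have "height \<phi> n x \<le> k" if "x \<in> {1..n}" for x
    using Max_ge[of "height \<phi> n ` {1..n}" "height \<phi> n x"] that assms by simp
  then have "{x \<in> {1..n}. height \<phi> n x \<le> k} = {1..n}"
    by blast
  then show ?thesis
    unfolding sum_card_height_eq by simp
qed

lemma levels_nonempty_eq_heights:
  "{\<nu> \<in> {1..n}. card {x \<in> {1..n}. height \<phi> n x = \<nu>} \<ge> 1} = height \<phi> n ` {1..n}"
proof -
  have "card {x \<in> {1..n}. height \<phi> n x = \<nu>} \<ge> 1 \<longleftrightarrow> (\<exists>x\<in>{1..n}. height \<phi> n x = \<nu>)" for \<nu>
    by (auto simp: Suc_le_eq card_gt_0_iff)
  then show ?thesis
    using height_ge_1 height_le_n by auto
qed

end

theorem proposition2p5: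
  fixes \<phi> :: "nat \<Rightarrow> nat" and k n :: nat
  assumes "\<phi> 0 = 0" and "\<forall>x\<ge>1. \<phi> x \<noteq> x"
    and "k \<ge> 1" and "n \<ge> 1"
    and "no_cycle \<phi> n"
  defines "p \<equiv> \<lambda>\<nu>. card {x \<in> {1..n}. height \<phi> n x = \<nu>}"
  defines "m \<equiv> Max {\<nu> \<in> {1..n}. p \<nu> \<ge> 1}"
  defines "\<pi> \<equiv> map p [1..<m+1]"
  shows "is_composition n \<pi> \<and> length \<pi> = m \<and> 1 \<le> m \<and> m \<le> n
         \<and> (\<forall>\<nu>\<in>{1..m}. p \<nu> \<ge> 1)
         \<and> (k \<le> m \<longrightarrow> card (J \<phi> n k) = n - (\<Sum>\<nu>=1..k. p \<nu>))
         \<and> (k \<ge> m \<longrightarrow> card (J \<phi> n k) = 0)"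
proof -
  interpret acyclic_local_function \<phi> n
    using assms(2,5) by unfold_locales
  have support_eq_heights: "{\<nu> \<in> {1..n}. p \<nu> \<ge> 1} = height \<phi> n ` {1..n}"
    unfolding p_def by (rule levels_nonempty_eq_heights)
  then have m_eq: "m = Max (height \<phi> n ` {1..n})"
    unfolding m_def by simp
  have m_bounds: "1 \<le> m" "m \<le> n"
    unfolding m_eq by (rule max_height_bounds[OF assms(4)])+
  have positive: "\<forall>\<nu>\<in>{1..m}. p \<nu> \<ge> 1"
    using support_eq_heights heights_initial_segment[OF assms(4)] unfolding m_eq by blast
  have sum_p_eq_n: "(\<Sum>\<nu>=1..k. p \<nu>) = n" if "m \<le> k" for k
    using sum_card_height_eq_n that unfolding m_eq p_def .
  have "is_composition n \<pi>"
    unfolding \<pi>_def using positive sum_p_eq_n[of m] by (rule is_composition_map_upt) simp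
  moreover have "card (J \<phi> n k) = n - (\<Sum>\<nu>=1..k. p \<nu>)"
    unfolding p_def by (rule card_J[OF assms(3)])
  ultimately show ?thesis
    using m_bounds positive sum_p_eq_n unfolding \<pi>_def by simp
qed

end
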